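(* Every independent set of size $14$ in $C_{5,14}^{\boxtimes 3}$ is Lee equivalent to $\{t\cdot(1,3,9): t\in\mathbb Z_{14}\}\subseteq\mathbb Z_{14}^3$ (arithmetic modulo $14$); in particular, up to Lee equivalence there is a unique independent set of size $14$ in $C_{5,14}^{\boxtimes 3}$.
   Context: For positive integers $q,d$ with $q\ge 2d$, the circular graph $C_{d,q}$ has vertex set $\mathbb Z_q$, two distinct vertices $x,y$ being adjacent iff $\min\{|x-y|,q-|x-y|\}<d$ (viewing $x,y$ as integers in $\{0,\dots,q-1\}$). For a graph $G=(V,E)$, $G^{\boxtimes n}$ has vertex set $V^n$, distinct $(u_i)$, $(v_i)$ adjacent iff for every $i$ either $u_i=v_i$ or $u_iv_i\in E$. An independent set is a set of pairwise non-adjacent vertices. Let $D_q$ be the dihedral group of order $2q$ acting on $\mathbb Z_q$ by $x\mapsto\pm x+c$ ($c\in\mathbb Z_q$); $D_q^n\rtimes S_n$ acts on $\mathbb Z_q^n$ by acting with $D_q$ in each coordinate separately and permuting coordinates. Sets $C,D\subseteq\mathbb Z_q^n$ are Lee equivalent if $g\cdot C=D$ for some $g\in D_q^n\rtimes S_n$. *)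

theory Defs
  imports Main "HOL-Combinatorics.Permutations"
begin

text \<open>Elements of Z_q are represented by integers in {0..<q}; vertices of
  the n-fold strong power are integer lists of length n with entries in {0..<q}.\<close>

definition circ_adj :: "nat \<Rightarrow> nat \<Rightarrow> int \<Rightarrow> int \<Rightarrow> bool" where
  "circ_adj d q x y \<longleftrightarrow> x \<noteq> y \<and> min \<bar>x - y\<bar> (int q - \<bar>x - y\<bar>) < int d"

definition sp_vertices :: "nat \<Rightarrow> nat \<Rightarrow> int list set" where
  "sp_vertices q n = {x. length x = n \<and> set x \<subseteq> {0..<int q}}"

definition sp_adj :: "nat \<Rightarrow> nat \<Rightarrow> nat \<Rightarrow> int list \<Rightarrow> int list \<Rightarrow> bool" where
  "sp_adj d q n u v \<longleftrightarrow> u \<noteq> v \<and> (\<forall>i<n. u ! i = v ! i \<or> circ_adj d q (u ! i) (v ! i))"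

definition sp_independent :: "nat \<Rightarrow> nat \<Rightarrow> nat \<Rightarrow> int list set \<Rightarrow> bool" where
  "sp_independent d q n S \<longleftrightarrow> S \<subseteq> sp_vertices q n \<and>
     (\<forall>u\<in>S. \<forall>v\<in>S. \<not> sp_adj d q n u v)"

text \<open>Action of (sigma, s, c) in D_q^n semidirect S_n: coordinatewise x \<mapsto> s_i x + c_i
  (s_i = +-1) after permuting coordinates by sigma.\<close>
definition lee_map :: "nat \<Rightarrow> nat \<Rightarrow> (nat \<Rightarrow> nat) \<Rightarrow> (nat \<Rightarrow> int) \<Rightarrow> (nat \<Rightarrow> int)
    \<Rightarrow> int list \<Rightarrow> int list" where
  "lee_map q n \<sigma> s c x = map (\<lambda>i. (s i * x ! (\<sigma> i) + c i) mod int q) [0..<n]"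

definition lee_equiv :: "nat \<Rightarrow> nat \<Rightarrow> int list set \<Rightarrow> int list set \<Rightarrow> bool" where
  "lee_equiv q n C D \<longleftrightarrow> (\<exists>\<sigma> s c. \<sigma> permutes {..<n} \<and> (\<forall>i<n. s i = 1 \<or> s i = -1) \<and>
     lee_map q n \<sigma> s c ` C = D)"

end

theory Submission
  imports Defs
begin

text \<open>Write \<open>near x y\<close> when \<open>x\<close> and \<open>y\<close> are equal or adjacent in \<open>C\<^sub>5\<^sub>,\<^sub>1\<^sub>4\<close>. Among any three
  points of \<open>\<int>\<^sub>1\<^sub>4\<close> two are near, so a window of five consecutive residues carries at most two
  points of an independent set of \<open>C\<^sub>5\<^sub>,\<^sub>1\<^sub>4\<close>; double counting over the 14 windows bounds
  independent sets of the strong square by 5. For an independent 14-set of the cube, the same count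
  on the first coordinate forces every window to carry exactly five points and hence every residue
  exactly one, so the set is the graph of \<open>t \<mapsto> (f t, g t)\<close>. The five points over a window project
  to an independent 5-set of the square, on which nearness of the \<open>f\<close>-values is a pentagon; hence
  whether \<open>f t\<close> and \<open>f (t + k)\<close> are near depends only on \<open>k\<close>, with pattern \<open>(\<alpha>, \<beta>, \<beta>, \<alpha>)\<close> for
  \<open>k = 1..4\<close>, and \<open>g\<close> has the complementary pattern. Averaging the increments of \<open>f\<close> over a
  period then shows that \<open>f\<close> is an arithmetic progression modulo 14 with difference \<open>\<plusminus>3\<close> if
  \<open>\<alpha>\<close> holds and \<open>\<plusminus>9\<close> otherwise, and likewise \<open>g\<close>; a Lee map turns such a graph into
  \<open>{(t, 3t, 9t)}\<close>.\<close>

lemma mod_eq_sub_mult: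
  fixes s q k :: int
  assumes "q * k \<le> s" "s < q * k + q"
  shows "s mod q = s - q * k"
proof -
  have "s mod q = (s - q * k) mod q" by (simp add: mod_diff_eq[symmetric])
  also have "\<dots> = s - q * k" using assms by (intro mod_pos_pos_trivial) auto
  finally show ?thesis .
qed

lemma mod_nonzero_if_abs_less:
  fixes s q :: int
  assumes "s \<noteq> 0" "\<bar>s\<bar> < q"
  shows "s mod q \<noteq> 0"
proof (cases "0 \<le> s")
  case True
  then show ?thesis using assms mod_eq_sub_mult[of q 0 s] by simp
next
  case False
  then show ?thesis using assms mod_eq_sub_mult[of q "-1" s] by simp
qed

definition near :: "int \<Rightarrow> int \<Rightarrow> bool" where
  "near x y \<longleftrightarrow> (y - x) mod 14 \<notin> {5..9}"

lemma near_refl [simp]: "near x x"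
  by (simp add: near_def)

lemma near_mod_iff: "near (x mod 14) (y mod 14) \<longleftrightarrow> near x y"
  unfolding near_def by (simp add: mod_diff_eq)

lemma near_sym: "near x y \<longleftrightarrow> near y x"
proof -
  have "(x - y) mod 14 = (if (y - x) mod 14 = 0 then 0 else 14 - (y - x) mod 14)"
    using zmod_zminus1_eq_if[of "y - x" 14] by simp
  then show ?thesis unfolding near_def by auto
qed

lemma near_triangle: "near x y \<or> near y z \<or> near x z"
proof -
  have far_sum: "(a + b) mod 14 \<notin> {5..9}" if "a \<in> {5..9}" "b \<in> {5..9}" for a b :: int
  proof (cases "a + b < 14")
    case True
    then show ?thesis using that mod_eq_sub_mult[of 14 0 "a + b"] by simp
  next
    case False
    then show ?thesis using that mod_eq_sub_mult[of 14 1 "a + b"] by simp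
  qed
  have "(z - x) mod 14 = ((y - x) mod 14 + (z - y) mod 14) mod 14"
    by (simp add: mod_add_eq)
  then show ?thesis
    using far_sum[of "(y - x) mod 14" "(z - y) mod 14"] unfolding near_def by argo
qed

lemma near_if_close:
  assumes "\<bar>y - x\<bar> \<le> 4"
  shows "near x y"
proof (cases "x \<le> y")
  case True
  then show ?thesis using assms mod_eq_sub_mult[of 14 0 "y - x"] unfolding near_def by simp
next
  case False
  then show ?thesis using assms mod_eq_sub_mult[of 14 "-1" "y - x"] unfolding near_def by simp
qed

lemma near_if_same_window:
  assumes "(x - w) mod 14 < 5" "(y - w) mod 14 < 5"
  shows "near x y"
proof -
  define a b where "a = (x - w) mod 14" and "b = (y - w) mod 14"
  have "(y - x) mod 14 = (b - a) mod 14"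
    unfolding a_def b_def by (simp add: mod_diff_eq)
  moreover have "0 \<le> a" "a < 5" "0 \<le> b" "b < 5"
    using assms unfolding a_def b_def by simp_all
  moreover have "(b - a) mod 14 = (if a \<le> b then b - a else b - a + 14)"
    using calculation(2-5) mod_eq_sub_mult[of 14 0 "b - a"] mod_eq_sub_mult[of 14 "-1" "b - a"]
    by (cases "a \<le> b") simp_all
  ultimately show ?thesis unfolding near_def by simp
qed

lemma near_iff_dvd:
  assumes "14 dvd s - (y - x)"
  shows "near x y \<longleftrightarrow> s mod 14 \<notin> {5..9}"
  using assms mod_eq_dvd_iff[of s 14 "y - x"] unfolding near_def by simp

lemma circ_adj_iff_near:
  assumes "x \<in> {0..<14}" "y \<in> {0..<14}"
  shows "circ_adj 5 14 x y \<longleftrightarrow> x \<noteq> y \<and> near x y"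
proof -
  have "(y - x) mod 14 = (if x \<le> y then y - x else y - x + 14)"
    using assms mod_eq_sub_mult[of 14 0 "y - x"] mod_eq_sub_mult[of 14 "-1" "y - x"]
    by (cases "x \<le> y") simp_all
  then show ?thesis
    using assms unfolding circ_adj_def near_def by (simp add: min_def abs_if) arith
qed

definition periodic :: "int \<Rightarrow> (int \<Rightarrow> 'a) \<Rightarrow> bool" where
  "periodic p h \<longleftrightarrow> (\<forall>t. h (t + p) = h t)"

lemma periodic_add_mult:
  assumes "periodic p h"
  shows "h (t + i * p) = h t"
proof (induction i rule: int_induct[where k = 0])
  case (step1 i)
  then show ?case
    using assms unfolding periodic_def by (metis add.assoc distrib_right mult_1)
next
  case (step2 i)
  then show ?case
    using assms unfolding periodic_def by (metis diff_add_cancel add.assoc distrib_right mult_1)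
qed simp

lemma periodic_mod:
  assumes "periodic p h"
  shows "h (t mod p) = h t"
  using periodic_add_mult[OF assms, of "t mod p" "t div p"] by simp

lemma periodic_coprime_const:
  assumes "periodic p h" "periodic r h" "coprime p r"
  shows "h t = h s"
proof -
  obtain u v where uv: "u * p + v * r = 1"
    using bezout_int[of p r] assms(3) by (auto simp: coprime_iff_gcd_eq_1)
  have "periodic 1 h"
    unfolding periodic_def
  proof
    fix t
    have "h (t + 1) = h (t + u * p + v * r)" by (simp add: uv add.assoc)
    also have "\<dots> = h t" using periodic_add_mult[OF assms(1)] periodic_add_mult[OF assms(2)] by simp
    finally show "h (t + 1) = h t" .
  qed
  then show ?thesis using periodic_add_mult[of 1 h 0] by (metis add_0 mult_1_right)
qed

lemma sum_periodic_shift: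
  assumes "periodic p h" "0 < p"
  shows "(\<Sum>t\<in>{0..<p}. h (t + k)) = (\<Sum>t\<in>{0..<p}. h t)"
proof -
  have "(\<Sum>t\<in>{0..<p}. h (t + k)) = (\<Sum>t\<in>{0..<p}. h ((t + k) mod p))"
    using periodic_mod[OF assms(1)] by simp
  also have "\<dots> = (\<Sum>t\<in>{0..<p}. h t)"
  proof (rule sum.reindex_bij_witness[where i = "\<lambda>s. (s - k) mod p" and j = "\<lambda>t. (t + k) mod p"])
    fix s assume "s \<in> {0..<p}"
    then show "((s - k) mod p + k) mod p = s" by (simp add: mod_add_left_eq)
  next
    fix t assume "t \<in> {0..<p}"
    then show "((t + k) mod p - k) mod p = t" by (simp add: mod_diff_left_eq)
  qed (use assms in auto)
  finally show ?thesis .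
qed

lemma periodic_pair_shift:
  assumes "periodic p f"
  shows "periodic p (\<lambda>t. F (f t) (f (t + k)))"
  unfolding periodic_def
proof
  fix t
  have "f (t + p + k) = f (t + k)"
    using assms[unfolded periodic_def, rule_format, of "t + k"] by (simp add: ac_simps)
  then show "F (f (t + p)) (f (t + p + k)) = F (f t) (f (t + k))"
    using assms unfolding periodic_def by simp
qed

lemma periodic_zero_if_sum_zero:
  fixes h :: "int \<Rightarrow> int"
  assumes "periodic q h" "0 < q" "\<And>t. 0 \<le> h t" "(\<Sum>t\<in>{0..<q}. h t) = 0"
  shows "h t = 0"
proof -
  have "h s = 0" if "s \<in> {0..<q}" for s
    using assms(3,4) that by (simp add: sum_nonneg_eq_0_iff)
  then show ?thesis using periodic_mod[OF assms(1), of t] assms(2) by simp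
qed

lemma card_le_2_if_no_three_distinct:
  assumes "\<And>x y z. x \<in> A \<Longrightarrow> y \<in> A \<Longrightarrow> z \<in> A \<Longrightarrow> x \<noteq> y \<Longrightarrow> y \<noteq> z \<Longrightarrow> x \<noteq> z \<Longrightarrow> False"
  shows "card A \<le> 2"
proof (rule ccontr)
  assume "\<not> card A \<le> 2"
  then obtain B where "B \<subseteq> A" "card B = 3"
    using obtain_subset_with_card_n[of 3 A] by auto
  then show False using assms by (auto simp: card_3_iff)
qed

lemma card_windows_containing:
  fixes q d x :: int
  assumes "0 \<le> d" "d \<le> q"
  shows "card {w \<in> {0..<q}. (x - w) mod q < d} = nat d"
proof -
  have "{w \<in> {0..<q}. (x - w) mod q < d} = (\<lambda>r. (x - r) mod q) ` {0..<d}"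
  proof (intro set_eqI iffI)
    fix w assume "w \<in> {w \<in> {0..<q}. (x - w) mod q < d}"
    then show "w \<in> (\<lambda>r. (x - r) mod q) ` {0..<d}"
      by (intro image_eqI[of _ _ "(x - w) mod q"]) (auto simp: mod_diff_right_eq)
  qed (use assms in \<open>auto simp: mod_diff_right_eq\<close>)
  moreover have "inj_on (\<lambda>r. (x - r) mod q) {0..<d}"
  proof (rule inj_onI)
    fix r r' assume "r \<in> {0..<d}" "r' \<in> {0..<d}" "(x - r) mod q = (x - r') mod q"
    then have "(x - (x - r)) mod q = (x - (x - r')) mod q" by (metis mod_diff_right_eq)
    then show "r = r'" using \<open>r \<in> {0..<d}\<close> \<open>r' \<in> {0..<d}\<close> assms by simp
  qed
  ultimately show ?thesis by (simp add: card_image)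
qed

lemma sum_card_windows:
  fixes q d :: int and a :: "'a \<Rightarrow> int"
  assumes "finite T" "0 \<le> d" "d \<le> q"
  shows "(\<Sum>w\<in>{0..<q}. card {p \<in> T. (a p - w) mod q < d}) = nat d * card T"
proof -
  have "(\<Sum>w\<in>{0..<q}. card {p \<in> T. (a p - w) mod q < d})
      = (\<Sum>w\<in>{0..<q}. \<Sum>p\<in>T. of_bool ((a p - w) mod q < d))"
    using assms(1) by (simp add: Int_def conj_commute)
  also have "\<dots> = (\<Sum>p\<in>T. \<Sum>w\<in>{0..<q}. of_bool ((a p - w) mod q < d))"
    by (rule sum.swap)
  also have "\<dots> = (\<Sum>p\<in>T. nat d)"
    using card_windows_containing[OF assms(2,3)] by (simp add: Int_def conj_commute)
  finally show ?thesis by simp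
qed

lemma card_window_eq_sum_fibres:
  fixes c :: "'a \<Rightarrow> int" and q d w :: int
  assumes "finite T" "c ` T \<subseteq> {0..<q}" "0 \<le> d" "d \<le> q"
  shows "card {p \<in> T. (c p - w) mod q < d} = (\<Sum>r\<in>{0..<d}. card {p \<in> T. c p = (w + r) mod q})"
proof -
  have "{p \<in> T. (c p - w) mod q < d} = (\<Union>r\<in>{0..<d}. {p \<in> T. c p = (w + r) mod q})"
  proof (intro set_eqI iffI)
    fix p assume p: "p \<in> {p \<in> T. (c p - w) mod q < d}"
    then have "c p = (w + (c p - w) mod q) mod q"
      using assms(2) by (auto simp: mod_add_right_eq)
    moreover have "0 < q" using p assms(2) by auto
    ultimately show "p \<in> (\<Union>r\<in>{0..<d}. {p \<in> T. c p = (w + r) mod q})"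
      using p by auto
  next
    fix p assume "p \<in> (\<Union>r\<in>{0..<d}. {p \<in> T. c p = (w + r) mod q})"
    then obtain r where "r \<in> {0..<d}" "p \<in> T" "c p = (w + r) mod q" by blast
    moreover from this have "(c p - w) mod q = r"
      using assms(4) by (simp add: mod_diff_left_eq)
    ultimately show "p \<in> {p \<in> T. (c p - w) mod q < d}" by simp
  qed
  moreover have "{p \<in> T. c p = (w + r) mod q} \<inter> {p \<in> T. c p = (w + r') mod q} = {}"
    if "r \<in> {0..<d}" "r' \<in> {0..<d}" "r \<noteq> r'" for r r'
  proof -
    have "((w + r) mod q - w) mod q \<noteq> ((w + r') mod q - w) mod q"
      using that assms(4) by (simp add: mod_diff_left_eq)
    then show ?thesis by auto
  qed
  ultimately show ?thesis
    using assms(1) by (simp add: card_UN_disjoint)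
qed

lemma card_independent_square_le_5:
  assumes "finite T"
    and indep: "\<And>p q. p \<in> T \<Longrightarrow> q \<in> T \<Longrightarrow> p \<noteq> q \<Longrightarrow> \<not> (near (a p) (a q) \<and> near (b p) (b q))"
  shows "card T \<le> 5"
proof -
  have "card {p \<in> T. (a p - w) mod 14 < 5} \<le> 2" for w
  proof (rule card_le_2_if_no_three_distinct)
    fix x y z assume xyz: "x \<in> {p \<in> T. (a p - w) mod 14 < 5}" "y \<in> {p \<in> T. (a p - w) mod 14 < 5}"
      "z \<in> {p \<in> T. (a p - w) mod 14 < 5}" and "x \<noteq> y" "y \<noteq> z" "x \<noteq> z"
    then have "\<not> near (b x) (b y)" "\<not> near (b y) (b z)" "\<not> near (b x) (b z)"
      using indep near_if_same_window by blast+
    then show False using near_triangle by blast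
  qed
  then have "(\<Sum>w\<in>{0..<14::int}. card {p \<in> T. (a p - w) mod 14 < 5}) \<le> (\<Sum>w\<in>{0..<14::int}. 2)"
    by (intro sum_mono)
  then show ?thesis using sum_card_windows[OF assms(1), of 5 14 a] by simp
qed

lemma card_window_eq_5:
  assumes "finite T" "card T = 14"
    and indep: "\<And>p q. p \<in> T \<Longrightarrow> q \<in> T \<Longrightarrow> p \<noteq> q \<Longrightarrow>
      \<not> (near (c p) (c q) \<and> near (a p) (a q) \<and> near (b p) (b q))"
  shows "card {p \<in> T. (c p - w) mod 14 < 5} = 5"
proof -
  define W where "W w = card {p \<in> T. (c p - w) mod 14 < 5}" for w
  have le: "W w \<le> 5" for w
    unfolding W_def
  proof (rule card_independent_square_le_5[where a = a and b = b])
    show "finite {p \<in> T. (c p - w) mod 14 < 5}" using assms(1) by simp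
  next
    fix p q assume "p \<in> {p \<in> T. (c p - w) mod 14 < 5}" "q \<in> {p \<in> T. (c p - w) mod 14 < 5}" "p \<noteq> q"
    then show "\<not> (near (a p) (a q) \<and> near (b p) (b q))"
      using indep near_if_same_window by blast
  qed
  have "(\<Sum>w\<in>{0..<14}. W w) = (\<Sum>w\<in>{0..<14::int}. 5)"
    using sum_card_windows[OF assms(1), of 5 14 c] assms(2) unfolding W_def by simp
  then have "W w = 5" if "w \<in> {0..<14}" for w
    using sum_strict_mono_ex1[of "{0..<14::int}" W "\<lambda>_. 5"] le that
    by (metis finite_atLeastLessThan_int le_neq_implies_less less_irrefl)
  moreover have "periodic 14 W"
    unfolding periodic_def W_def by (simp add: diff_diff_eq[symmetric])
  ultimately show ?thesis
    using periodic_mod[of 14 W w] unfolding W_def by simp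
qed

lemma first_coordinate_bij:
  assumes "card T = 14" "c ` T \<subseteq> {0..<14}"
    and indep: "\<And>p q. p \<in> T \<Longrightarrow> q \<in> T \<Longrightarrow> p \<noteq> q \<Longrightarrow>
      \<not> (near (c p) (c q) \<and> near (a p) (a q) \<and> near (b p) (b q))"
  shows "bij_betw c T {0..<14}"
proof -
  have fin: "finite T" using assms(1) by (intro card_ge_0_finite) simp
  define N where "N y = card {p \<in> T. c p = y mod 14}" for y
  have window: "N w + N (w + 1) + N (w + 2) + N (w + 3) + N (w + 4) = 5" for w
  proof -
    have "{0..<5::int} = {0, 1, 2, 3, 4}" by auto
    then show ?thesis
      using card_window_eq_sum_fibres[OF fin assms(2), of 5 w] card_window_eq_5[OF fin assms(1) indep]
      unfolding N_def by simp
  qed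
  have "N (t + 5) = N t" for t
    using window[of t] window[of "t + 1"] by (simp add: add.assoc)
  then have "periodic 5 N" unfolding periodic_def by blast
  moreover have "periodic 14 N"
    unfolding periodic_def N_def by simp
  ultimately have N_const: "N y = N 0" for y
    by (rule periodic_coprime_const) (simp add: coprime_iff_gcd_eq_1 gcd_non_0_int)
  have fibre: "card {p \<in> T. c p = y mod 14} = 1" for y
    using window[of 0] N_const[of 1] N_const[of 2] N_const[of 3] N_const[of 4] N_const[of y]
    unfolding N_def[symmetric] by simp
  have "inj_on c T"
  proof (rule inj_onI)
    fix p q assume pq: "p \<in> T" "q \<in> T" "c p = c q"
    then have "c p mod 14 = c p" using assms(2) by auto
    then have "p \<in> {r \<in> T. c r = c p mod 14}" "q \<in> {r \<in> T. c r = c p mod 14}"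
      using pq by auto
    then show "p = q"
      using fibre[of "c p"] card_le_Suc0_iff_eq[of "{r \<in> T. c r = c p mod 14}"] fin by auto
  qed
  moreover have "card (c ` T) = card {0..<14::int}"
    using card_image[OF \<open>inj_on c T\<close>] assms(1) by simp
  then have "c ` T = {0..<14}"
    using card_subset_eq[OF finite_atLeastLessThan_int assms(2)] by simp
  ultimately show ?thesis unfolding bij_betw_def by blast
qed

text \<open>Functions on \<open>\<int>\<^sub>1\<^sub>4\<close> are encoded as 14-periodic functions on \<open>\<int>\<close>; the predicate says
  that the graph \<open>{(t, f t, g t)}\<close> is independent in the strong cube.\<close>

definition independent_graph :: "(int \<Rightarrow> int) \<Rightarrow> (int \<Rightarrow> int) \<Rightarrow> bool" where
  "independent_graph f g \<longleftrightarrow> periodic 14 f \<and> periodic 14 g \<and>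
     (\<forall>y z. (y - z) mod 14 \<noteq> 0 \<longrightarrow> near y z \<longrightarrow> \<not> (near (f y) (f z) \<and> near (g y) (g z)))"

lemma independent_graph_swap: "independent_graph f g \<Longrightarrow> independent_graph g f"
  unfolding independent_graph_def by blast

lemma all_less_3: "(\<forall>i<3::nat. P i) \<longleftrightarrow> P 0 \<and> P 1 \<and> P 2"
  by (auto simp: numeral_3_eq_3 numeral_2_eq_2 less_Suc_eq)

lemma list_length_3: "length xs = 3 \<Longrightarrow> xs = [xs ! 0, xs ! 1, xs ! 2]"
  by (auto simp: numeral_3_eq_3 length_Suc_conv)

lemma sp_vertices_nth:
  assumes "x \<in> sp_vertices q n" "i < n"
  shows "x ! i \<in> {0..<int q}"
proof -
  have "x ! i \<in> set x" "set x \<subseteq> {0..<int q}"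
    using assms by (simp_all add: sp_vertices_def)
  then show ?thesis by blast
qed

lemma sp_adj_iff_near:
  assumes "u \<in> sp_vertices 14 3" "v \<in> sp_vertices 14 3"
  shows "sp_adj 5 14 3 u v \<longleftrightarrow> u \<noteq> v \<and> near (u ! 0) (v ! 0) \<and> near (u ! 1) (v ! 1) \<and> near (u ! 2) (v ! 2)"
proof -
  have "u ! i \<in> {0..<14}" "v ! i \<in> {0..<14}" if "i < 3" for i
    using sp_vertices_nth[OF assms(1) that] sp_vertices_nth[OF assms(2) that] by simp_all
  then have "(u ! i = v ! i \<or> circ_adj 5 14 (u ! i) (v ! i)) \<longleftrightarrow> near (u ! i) (v ! i)" if "i < 3" for i
    using circ_adj_iff_near that by auto
  then show ?thesis unfolding sp_adj_def all_less_3 by simp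
qed

lemma independent_set_is_graph:
  assumes "sp_independent 5 14 3 S" "card S = 14"
  obtains f g where "independent_graph f g" "S = (\<lambda>t. [t, f t, g t]) ` {0..<14}"
proof -
  have vert: "p \<in> sp_vertices 14 3" if "p \<in> S" for p
    using assms(1) that unfolding sp_independent_def by blast
  have indep: "\<not> (near (p ! 0) (q ! 0) \<and> near (p ! 1) (q ! 1) \<and> near (p ! 2) (q ! 2))"
    if "p \<in> S" "q \<in> S" "p \<noteq> q" for p q
  proof -
    have "\<not> sp_adj 5 14 3 p q" using assms(1) that(1,2) unfolding sp_independent_def by blast
    then show ?thesis using sp_adj_iff_near[OF vert[OF that(1)] vert[OF that(2)]] that(3) by simp
  qed
  have "p ! 0 \<in> {0..<14}" if "p \<in> S" for p
    using sp_vertices_nth[OF vert[OF that], of 0] by simp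
  then have bij: "bij_betw (\<lambda>p. p ! 0) S {0..<14}"
    using first_coordinate_bij[where c = "\<lambda>p. p ! 0", OF assms(2) _ indep] by blast
  define P where "P = the_inv_into S (\<lambda>p. p ! 0)"
  define f where "f t = P (t mod 14) ! 1" for t
  define g where "g t = P (t mod 14) ! 2" for t
  have P: "P t \<in> S" "P t ! 0 = t" if "t \<in> {0..<14}" for t
  proof -
    show "P t \<in> S"
      using bij_betwE[OF bij_betw_the_inv_into[OF bij]] that unfolding P_def by blast
    show "P t ! 0 = t"
      using f_the_inv_into_f_bij_betw[OF bij, of t] that unfolding P_def by blast
  qed
  have "P t = [t, f t, g t]" if "t \<in> {0..<14}" for t
  proof -
    have "length (P t) = 3" using vert[OF P(1)[OF that]] unfolding sp_vertices_def by simp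
    then have "P t = [P t ! 0, P t ! 1, P t ! 2]" by (rule list_length_3)
    also have "\<dots> = [t, f t, g t]" using P(2)[OF that] that by (simp add: f_def g_def)
    finally show ?thesis .
  qed
  moreover have "S = P ` {0..<14}"
    using bij_betw_imp_surj_on[OF bij_betw_the_inv_into[OF bij]] unfolding P_def by simp
  ultimately have "S = (\<lambda>t. [t, f t, g t]) ` {0..<14}" by simp
  moreover have "independent_graph f g"
    unfolding independent_graph_def
  proof (intro conjI allI impI)
    show "periodic 14 f" "periodic 14 g" unfolding periodic_def f_def g_def by simp_all
  next
    fix y z :: int assume "(y - z) mod 14 \<noteq> 0" "near y z"
    then have "y mod 14 \<noteq> z mod 14" "near (y mod 14) (z mod 14)"
      by (metis mod_diff_eq diff_self mod_0, simp add: near_mod_iff)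
    moreover have "y mod 14 \<in> {0..<14}" "z mod 14 \<in> {0..<14}" by simp_all
    ultimately show "\<not> (near (f y) (f z) \<and> near (g y) (g z))"
      using indep[OF P(1) P(1)] P(2) unfolding f_def g_def by metis
  qed
  ultimately show ?thesis using that by blast
qed

lemma sp_independent_graph:
  assumes "independent_graph f g" "\<And>t. f t \<in> {0..<14}" "\<And>t. g t \<in> {0..<14}"
  shows "sp_independent 5 14 3 ((\<lambda>t. [t, f t, g t]) ` {0..<14})"
proof -
  have vert: "(\<lambda>t. [t, f t, g t]) ` {0..<14} \<subseteq> sp_vertices 14 3"
    using assms(2,3) unfolding sp_vertices_def by auto
  have "\<not> sp_adj 5 14 3 [y, f y, g y] [z, f z, g z]" if "y \<in> {0..<14}" "z \<in> {0..<14}" for y z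
  proof (cases "y = z")
    case False
    then have "(y - z) mod 14 \<noteq> 0" using that by (intro mod_nonzero_if_abs_less) auto
    then have "\<not> (near y z \<and> near (f y) (f z) \<and> near (g y) (g z))"
      using assms(1) unfolding independent_graph_def by blast
    moreover have "[y, f y, g y] \<in> sp_vertices 14 3" "[z, f z, g z] \<in> sp_vertices 14 3"
      using vert that by auto
    ultimately show ?thesis using sp_adj_iff_near by simp
  qed (simp add: sp_adj_def)
  then show ?thesis using vert unfolding sp_independent_def by blast
qed

text \<open>On five points, two disjoint relations whose complements are triangle-free are
  complementary pentagons, the extremal configuration for the Ramsey number \<open>R(3,3) = 6\<close>.\<close>

lemma pentagon_degree:
  assumes "card V = 5" "x \<in> V"
    and disjoint: "\<And>u v. u \<in> V \<Longrightarrow> v \<in> V \<Longrightarrow> u \<noteq> v \<Longrightarrow> \<not> (F u v \<and> G u v)"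
    and F_triangle: "\<And>u v w. u \<in> V \<Longrightarrow> v \<in> V \<Longrightarrow> w \<in> V \<Longrightarrow> F u v \<or> F v w \<or> F u w"
    and G_triangle: "\<And>u v w. u \<in> V \<Longrightarrow> v \<in> V \<Longrightarrow> w \<in> V \<Longrightarrow> G u v \<or> G v w \<or> G u w"
  shows "card {y \<in> V. y \<noteq> x \<and> F x y} = 2"
proof -
  define A where "A = {y \<in> V. y \<noteq> x \<and> F x y}"
  define B where "B = {y \<in> V. y \<noteq> x \<and> \<not> F x y}"
  have "card A \<le> 2"
  proof (rule card_le_2_if_no_three_distinct)
    have G_pair: "G y y'" if "y \<in> A" "y' \<in> A" for y y'
      using that G_triangle[of x y y'] disjoint[of x y] disjoint[of x y'] assms(2) unfolding A_def by blast
    fix y1 y2 y3 assume "y1 \<in> A" "y2 \<in> A" "y3 \<in> A" "y1 \<noteq> y2" "y2 \<noteq> y3" "y1 \<noteq> y3"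
    then show False
      using F_triangle[of y1 y2 y3] G_pair disjoint unfolding A_def by blast
  qed
  moreover have "card B \<le> 2"
  proof (rule card_le_2_if_no_three_distinct)
    have F_pair: "F y y'" if "y \<in> B" "y' \<in> B" for y y'
      using that F_triangle[of x y y'] assms(2) unfolding B_def by blast
    fix y1 y2 y3 assume "y1 \<in> B" "y2 \<in> B" "y3 \<in> B" "y1 \<noteq> y2" "y2 \<noteq> y3" "y1 \<noteq> y3"
    then show False
      using G_triangle[of y1 y2 y3] F_pair disjoint unfolding B_def by blast
  qed
  moreover have "card A + card B = 4"
  proof -
    have "finite V" using assms(1) by (intro card_ge_0_finite) simp
    moreover have "A \<union> B = V - {x}" "A \<inter> B = {}" unfolding A_def B_def by auto
    ultimately have "card A + card B = card (V - {x})"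
      by (metis card_Un_disjoint finite_Diff finite_Un)
    then show ?thesis using assms(1,2) by simp
  qed
  ultimately show ?thesis unfolding A_def by linarith
qed

lemma window_degree:
  assumes "independent_graph f g" "-4 \<le> i" "i \<le> 0"
  shows "card {k \<in> {i..i + 4}. k \<noteq> 0 \<and> near (f t) (f (t + k))} = 2"
proof -
  have indep: "\<not> (near (f y) (f z) \<and> near (g y) (g z))" if "(y - z) mod 14 \<noteq> 0" "near y z" for y z
    using assms(1) that unfolding independent_graph_def by blast
  have "card {l \<in> {i..i + 4}. l \<noteq> 0 \<and> near (f (t + 0)) (f (t + l))} = 2"
  proof (rule pentagon_degree[where G = "\<lambda>k l. near (g (t + k)) (g (t + l))"])
    fix k l assume "k \<in> {i..i + 4}" "l \<in> {i..i + 4}" "k \<noteq> l"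
    then have "(t + k - (t + l)) mod 14 \<noteq> 0" "near (t + k) (t + l)"
      using mod_nonzero_if_abs_less[of "k - l" 14] near_if_close[of "t + l" "t + k"] by auto
    then show "\<not> (near (f (t + k)) (f (t + l)) \<and> near (g (t + k)) (g (t + l)))"
      by (rule indep)
  qed (use assms(2,3) near_triangle in auto)
  then show ?thesis by simp
qed

lemma near_step_shift:
  assumes "independent_graph f g" "1 \<le> k" "k \<le> 4"
  shows "near (f t) (f (t + k)) \<longleftrightarrow> near (f t) (f (t + k - 5))"
proof -
  define P where "P j \<longleftrightarrow> near (f t) (f (t + j))" for j
  define A where "A = {j \<in> {k - 4..k - 1}. j \<noteq> 0 \<and> P j}"
  have "{j \<in> {k - 4..k - 4 + 4}. j \<noteq> 0 \<and> P j} = (if P k then insert k A else A)"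
    using assms(2) unfolding A_def by (auto simp: order_le_less)
  moreover have "{j \<in> {k - 5..k - 5 + 4}. j \<noteq> 0 \<and> P j} = (if P (k - 5) then insert (k - 5) A else A)"
    using assms(3) unfolding A_def by (auto simp: order_le_less)
  moreover have "k \<notin> A" "k - 5 \<notin> A" unfolding A_def by auto
  moreover have "finite A"
    unfolding A_def by (rule rev_finite_subset[OF finite_atLeastAtMost_int[of "k - 4" "k - 1"]]) auto
  ultimately show ?thesis
    using window_degree[OF assms(1), of "k - 4" t] window_degree[OF assms(1), of "k - 5" t] assms(2,3)
    by (cases "P k"; cases "P (k - 5)") (simp_all add: P_def add_diff_eq card_insert_disjoint)
qed

lemma step_pattern:
  assumes "independent_graph f g"
  obtains \<alpha> \<beta> where "\<alpha> \<noteq> \<beta>"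
    "\<And>t. near (f t) (f (t + 1)) = \<alpha>" "\<And>t. near (f t) (f (t + 4)) = \<alpha>"
    "\<And>t. near (f t) (f (t + 2)) = \<beta>" "\<And>t. near (f t) (f (t + 3)) = \<beta>"
proof -
  define c where "c k t \<longleftrightarrow> near (f t) (f (t + k))" for k t
  have shift: "c k t = c (5 - k) (t + k - 5)" if "1 \<le> k" "k \<le> 4" for k t
    using near_step_shift[OF assms that, of t] near_sym unfolding c_def by simp
  have per14: "periodic 14 (c k)" for k
    unfolding c_def[abs_def] using assms unfolding independent_graph_def
    by (intro periodic_pair_shift[where F = near]) simp
  have "c 1 (t + 5) = c 1 t" "c 2 (t + 5) = c 2 t" for t
    using shift[of 1 "t + 5"] shift[of 4 "t + 1"] shift[of 2 "t + 5"] shift[of 3 "t + 2"] by (simp_all add: ac_simps)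
  then have "periodic 5 (c 1)" "periodic 5 (c 2)" unfolding periodic_def by blast+
  then have const: "c 1 t = c 1 0" "c 2 t = c 2 0" for t
    using periodic_coprime_const[OF _ per14, of 5] by (simp_all add: coprime_iff_gcd_eq_1 gcd_non_0_int)
  have "c 4 t = c 1 0" "c 3 t = c 2 0" for t
    using shift[of 4 t] shift[of 3 t] const(1)[of "t - 1"] const(2)[of "t - 2"] by simp_all
  moreover have "c 1 0 \<noteq> c 2 0"
  proof
    assume same: "c 1 0 = c 2 0"
    have "{0..4::int} = {0, 1, 2, 3, 4}" by auto
    then have "{k \<in> {0..0 + 4}. k \<noteq> 0 \<and> c k 0} = (if c 1 0 then {1, 2, 3, 4} else {})"
      using same calculation[of 0] by auto
    then show False using window_degree[OF assms, of 0 0] unfolding c_def by (simp split: if_splits)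
  qed
  ultimately show ?thesis using that[of "c 1 0" "c 2 0"] const unfolding c_def by auto
qed

lemma periodic_steps_eq_3:
  fixes e :: "int \<Rightarrow> int"
  assumes per: "periodic 14 e"
    and two: "\<And>t. 5 \<le> e t + e (t + 1)"
    and three: "\<And>t. e t + e (t + 1) + e (t + 2) \<le> 9"
    and dvd: "14 dvd (\<Sum>t\<in>{0..<14}. e t)"
  shows "e t = 3"
proof -
  define S where "S = (\<Sum>t\<in>{0..<14}. e t)"
  have shift: "(\<Sum>t\<in>{0..<14}. e (t + k)) = S" for k
    unfolding S_def by (rule sum_periodic_shift[OF per]) simp
  have "(\<Sum>t\<in>{0..<14::int}. 5) \<le> (\<Sum>t\<in>{0..<14}. e t + e (t + 1))"
    using two by (intro sum_mono)
  then have "70 \<le> 2 * S" by (simp add: sum.distrib shift[of 0, simplified] shift)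
  have sum3: "(\<Sum>t\<in>{0..<14}. e t + e (t + 1) + e (t + 2)) = 3 * S"
    by (simp add: sum.distrib shift[of 0, simplified] shift)
  moreover have "(\<Sum>t\<in>{0..<14}. e t + e (t + 1) + e (t + 2)) \<le> (\<Sum>t\<in>{0..<14::int}. 9)"
    using three by (intro sum_mono)
  ultimately have "3 * S \<le> 126" by simp
  have "S = 42"
    using dvd \<open>70 \<le> 2 * S\<close> \<open>3 * S \<le> 126\<close> unfolding S_def[symmetric] by (auto elim!: dvdE)
  have full: "9 - (e t + e (t + 1) + e (t + 2)) = 0" for t
  proof (rule periodic_zero_if_sum_zero[where h = "\<lambda>t. 9 - (e t + e (t + 1) + e (t + 2))" and q = 14])
    show "periodic 14 (\<lambda>t. 9 - (e t + e (t + 1) + e (t + 2)))"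
      using per unfolding periodic_def by (metis add.commute add.left_commute)
    show "(\<Sum>t\<in>{0..<14}. 9 - (e t + e (t + 1) + e (t + 2))) = 0"
      using sum3 \<open>S = 42\<close> by (simp add: sum_subtractf)
  qed (use three in simp_all)
  have "e (t + 3) = e t" for t
    using full[of t] full[of "t + 1"] by (simp add: ac_simps)
  then have "periodic 3 e" unfolding periodic_def by blast
  then have const: "e t = e 0" for t
    using periodic_coprime_const[OF _ per] by (simp add: coprime_iff_gcd_eq_1 gcd_non_0_int)
  then have "S = 14 * e 0"
    unfolding S_def by (subst sum.cong[OF refl const]) simp
  then show ?thesis using \<open>S = 42\<close> const[of t] by simp
qed

lemma periodic_steps_5_or_9:
  fixes d :: "int \<Rightarrow> int"
  assumes per: "periodic 14 d"
    and range: "\<And>t. 5 \<le> d t \<and> d t \<le> 9"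
    and four: "\<And>t. d t + d (t + 1) + d (t + 2) + d (t + 3) \<le> 23 \<or>
                    33 \<le> d t + d (t + 1) + d (t + 2) + d (t + 3)"
    and dvd: "14 dvd (\<Sum>t\<in>{0..<14}. d t)"
  shows "(\<forall>t. d t = 5) \<or> (\<forall>t. d t = 9)"
proof -
  define S where "S = (\<Sum>t\<in>{0..<14}. d t)"
  define D where "D t = d t + d (t + 1) + d (t + 2) + d (t + 3)" for t
  have shift: "(\<Sum>t\<in>{0..<14}. d (t + k)) = S" for k
    unfolding S_def by (rule sum_periodic_shift[OF per]) simp
  have sumD: "(\<Sum>t\<in>{0..<14}. D t) = 4 * S"
    unfolding D_def by (simp add: sum.distrib shift[of 0, simplified] shift)
  have "(\<Sum>t\<in>{0..<14::int}. 5) \<le> S" "S \<le> (\<Sum>t\<in>{0..<14::int}. 9)"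
    unfolding S_def by (intro sum_mono, use range in blast)+
  then have S_bounds: "70 \<le> S" "S \<le> 126" by simp_all
  have D_step: "D (t + 1) = D t - d t + d (t + 4)" for t
    unfolding D_def by (simp add: ac_simps)
  have "(D (t + 1) \<le> 23) = (D t \<le> 23)" for t
    using D_step[of t] range[of t] range[of "t + 4"] four[of t] four[of "t + 1"]
    unfolding D_def[symmetric] by linarith
  then have "periodic 1 (\<lambda>t. D t \<le> 23)" unfolding periodic_def by blast
  then have low_iff: "(D t \<le> 23) = (D 0 \<le> 23)" for t
    using periodic_add_mult[of 1 "\<lambda>t. D t \<le> 23" 0 t] by simp
  show ?thesis
  proof (cases "D 0 \<le> 23")
    case True
    then have "(\<Sum>t\<in>{0..<14}. D t) \<le> (\<Sum>t\<in>{0..<14::int}. 23)"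
      using low_iff by (intro sum_mono) auto
    then have "S = 70" using sumD S_bounds dvd unfolding S_def[symmetric] by (auto elim!: dvdE)
    have "d t - 5 = 0" for t
    proof (rule periodic_zero_if_sum_zero[where h = "\<lambda>t. d t - 5" and q = 14])
      show "periodic 14 (\<lambda>t. d t - 5)" using per unfolding periodic_def by simp
      show "(\<Sum>t\<in>{0..<14}. d t - 5) = 0" using \<open>S = 70\<close> unfolding S_def by (simp add: sum_subtractf)
    qed (use range in simp_all)
    then show ?thesis by simp
  next
    case False
    then have "(\<Sum>t\<in>{0..<14::int}. 33) \<le> (\<Sum>t\<in>{0..<14}. D t)"
      using low_iff four unfolding D_def[symmetric] by (intro sum_mono) (meson not_le)
    then have "S = 126" using sumD S_bounds dvd unfolding S_def[symmetric] by (auto elim!: dvdE)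
    have "9 - d t = 0" for t
    proof (rule periodic_zero_if_sum_zero[where h = "\<lambda>t. 9 - d t" and q = 14])
      show "periodic 14 (\<lambda>t. 9 - d t)" using per unfolding periodic_def by simp
      show "(\<Sum>t\<in>{0..<14}. 9 - d t) = 0" using \<open>S = 126\<close> unfolding S_def by (simp add: sum_subtractf)
    qed (use range in simp_all)
    then show ?thesis by simp
  qed
qed

definition mod_progression :: "int \<Rightarrow> int \<Rightarrow> (int \<Rightarrow> int) \<Rightarrow> bool" where
  "mod_progression q a f \<longleftrightarrow> (\<forall>t. f t mod q = (f 0 + a * t) mod q)"

lemma mod_progression_if_steps:
  assumes "\<And>t. q dvd f (t + 1) - f t - a"
  shows "mod_progression q a f"
proof -
  have "q dvd f t - f 0 - a * t" for t
  proof (induction t rule: int_induct[where k = 0])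
    case (step1 i)
    have "q dvd (f (i + 1) - f i - a) + (f i - f 0 - a * i)"
      using assms[of i] step1.IH by (rule dvd_add)
    then show ?case by (simp add: algebra_simps)
  next
    case (step2 i)
    have "q dvd (f i - f 0 - a * i) - (f (i - 1 + 1) - f (i - 1) - a)"
      using step2.IH assms[of "i - 1"] by (rule dvd_diff)
    then show ?case by (simp add: algebra_simps)
  qed simp
  then show ?thesis unfolding mod_progression_def by (simp add: mod_eq_dvd_iff algebra_simps)
qed

lemma mod_progression_cong:
  assumes "mod_progression q a f" "q dvd a - b"
  shows "mod_progression q b f"
  unfolding mod_progression_def
proof
  fix t
  have "q dvd (f t - (f 0 + a * t)) + (a - b) * t"
    using assms unfolding mod_progression_def by (simp add: mod_eq_dvd_iff)
  then show "f t mod q = (f 0 + b * t) mod q"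
    by (simp add: mod_eq_dvd_iff algebra_simps)
qed

lemma dvd_sum_steps:
  fixes e f :: "int \<Rightarrow> int"
  assumes "\<And>t. q dvd e t - (f (t + 1) - f t)"
  shows "q dvd (\<Sum>i<k. e (t + int i)) - (f (t + int k) - f t)"
proof (induction k)
  case (Suc k)
  have "(\<Sum>i<Suc k. e (t + int i)) - (f (t + int (Suc k)) - f t)
      = ((\<Sum>i<k. e (t + int i)) - (f (t + int k) - f t)) + (e (t + int k) - (f (t + int k + 1) - f (t + int k)))"
    by (simp add: algebra_simps)
  moreover have "q dvd ((\<Sum>i<k. e (t + int i)) - (f (t + int k) - f t)) + (e (t + int k) - (f (t + int k + 1) - f (t + int k)))"
    using Suc.IH assms[of "t + int k"] by (rule dvd_add)
  ultimately show ?case by (simp only:)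
qed simp

lemma dvd_sum_of_periodic_steps:
  fixes e f :: "int \<Rightarrow> int"
  assumes "periodic q f" "0 < q" "\<And>t. q dvd e t - (f (t + 1) - f t)"
  shows "q dvd (\<Sum>t\<in>{0..<q}. e t)"
proof -
  have "(\<Sum>t\<in>{0..<q}. e t) = (\<Sum>t\<in>{0..<q}. e t - (f (t + 1) - f t)) + ((\<Sum>t\<in>{0..<q}. f (t + 1)) - (\<Sum>t\<in>{0..<q}. f t))"
    by (simp add: sum_subtractf)
  also have "(\<Sum>t\<in>{0..<q}. f (t + 1)) = (\<Sum>t\<in>{0..<q}. f t)"
    by (rule sum_periodic_shift[OF assms(1,2)])
  finally show ?thesis using assms(3) by (simp add: dvd_sum)
qed

lemma progression_if_far_1_4:
  fixes f :: "int \<Rightarrow> int"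
  assumes per: "periodic 14 f"
    and far1: "\<And>t. \<not> near (f t) (f (t + 1))"
    and far4: "\<And>t. \<not> near (f t) (f (t + 4))"
  obtains u where "u = 1 \<or> u = -1" "mod_progression 14 (u * 9) f"
proof -
  define d where "d t = (f (t + 1) - f t) mod 14" for t
  have step: "14 dvd d t - (f (t + 1) - f t)" for t
    using mod_eq_dvd_iff[of "d t" 14 "f (t + 1) - f t"] unfolding d_def by simp
  have range: "5 \<le> d t \<and> d t \<le> 9" for t
    using far1[of t] unfolding near_def d_def by simp
  have "d t + d (t + 1) + d (t + 2) + d (t + 3) \<le> 23 \<or> 33 \<le> d t + d (t + 1) + d (t + 2) + d (t + 3)"
    (is "?D \<le> 23 \<or> 33 \<le> ?D") for t
  proof -
    have "14 dvd ?D - (f (t + 4) - f t)"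
      using dvd_sum_steps[where e = d and f = f, OF step, of t 4] by (simp add: numeral_eq_Suc ac_simps)
    then have "?D mod 14 \<in> {5..9}" using far4[of t] near_iff_dvd by blast
    moreover have "20 \<le> ?D" "?D \<le> 36" using range[of t] range[of "t + 1"] range[of "t + 2"] range[of "t + 3"] by linarith+
    ultimately show ?thesis
      using mod_eq_sub_mult[of 14 1 ?D] mod_eq_sub_mult[of 14 2 ?D] by (cases "?D < 28") simp_all
  qed
  moreover have "periodic 14 d" unfolding d_def by (rule periodic_pair_shift[OF per])
  moreover have "14 dvd (\<Sum>t\<in>{0..<14}. d t)"
    using dvd_sum_of_periodic_steps[where e = d, OF per _ step] by simp
  ultimately have "(\<forall>t. d t = 5) \<or> (\<forall>t. d t = 9)"
    using periodic_steps_5_or_9 range by blast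
  then show ?thesis
  proof
    assume "\<forall>t. d t = 5"
    then have "mod_progression 14 5 f"
      using step by (intro mod_progression_if_steps) (simp add: dvd_diff_commute)
    then have "mod_progression 14 (-1 * 9) f" by (rule mod_progression_cong) simp
    then show ?thesis using that by blast
  next
    assume "\<forall>t. d t = 9"
    then have "mod_progression 14 (1 * 9) f"
      using step by (intro mod_progression_if_steps) (simp add: dvd_diff_commute)
    then show ?thesis using that by blast
  qed
qed

lemma progression_if_near_1_far_2_3:
  fixes f :: "int \<Rightarrow> int"
  assumes per: "periodic 14 f"
    and near1: "\<And>t. near (f t) (f (t + 1))"
    and far2: "\<And>t. \<not> near (f t) (f (t + 2))"
    and far3: "\<And>t. \<not> near (f t) (f (t + 3))"
  obtains u where "u = 1 \<or> u = -1" "mod_progression 14 (u * 3) f"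
proof -
  \<comment> \<open>the representative of \<open>f (t + 1) - f t\<close> in \<open>[-4, 9]\<close>; nearness confines it to \<open>[-4, 4]\<close>\<close>
  define e where "e t = (f (t + 1) - f t + 4) mod 14 - 4" for t
  have step: "14 dvd e t - (f (t + 1) - f t)" for t
  proof -
    have "14 dvd (f (t + 1) - f t + 4) mod 14 - (f (t + 1) - f t + 4)"
      using mod_eq_dvd_iff[of "(f (t + 1) - f t + 4) mod 14" 14 "f (t + 1) - f t + 4"] by simp
    then show ?thesis unfolding e_def by (simp add: algebra_simps)
  qed
  have range: "-4 \<le> e t \<and> e t \<le> 4" for t
  proof -
    have "e t mod 14 \<notin> {5..9}" using near1[of t] near_iff_dvd[OF step] by blast
    moreover have "-4 \<le> e t" "e t \<le> 9" unfolding e_def by simp_all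
    ultimately show ?thesis using mod_eq_sub_mult[of 14 0 "e t"] by (cases "0 \<le> e t") simp_all
  qed
  have pair: "5 \<le> e t + e (t + 1) \<or> e t + e (t + 1) \<le> -5" (is "5 \<le> ?P \<or> ?P \<le> -5") for t
  proof -
    have "14 dvd ?P - (f (t + 2) - f t)"
      using dvd_sum_steps[where e = e and f = f, OF step, of t 2] by (simp add: numeral_eq_Suc ac_simps)
    then have "?P mod 14 \<in> {5..9}" using far2[of t] near_iff_dvd by blast
    moreover have "-8 \<le> ?P" "?P \<le> 8" using range[of t] range[of "t + 1"] by linarith+
    ultimately show ?thesis
      using mod_eq_sub_mult[of 14 0 ?P] mod_eq_sub_mult[of 14 "-1" ?P] by (cases "0 \<le> ?P") simp_all
  qed
  have triple: "(5 \<le> e t + e (t + 1) + e (t + 2) \<and> e t + e (t + 1) + e (t + 2) \<le> 9) \<or>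
      (-9 \<le> e t + e (t + 1) + e (t + 2) \<and> e t + e (t + 1) + e (t + 2) \<le> -5)"
    (is "(5 \<le> ?T \<and> ?T \<le> 9) \<or> (-9 \<le> ?T \<and> ?T \<le> -5)") for t
  proof -
    have "14 dvd ?T - (f (t + 3) - f t)"
      using dvd_sum_steps[where e = e and f = f, OF step, of t 3] by (simp add: numeral_eq_Suc ac_simps)
    then have "?T mod 14 \<in> {5..9}" using far3[of t] near_iff_dvd by blast
    moreover have "-12 \<le> ?T" "?T \<le> 12"
      using range[of t] range[of "t + 1"] range[of "t + 2"] by linarith+
    ultimately show ?thesis
      using mod_eq_sub_mult[of 14 0 ?T] mod_eq_sub_mult[of 14 "-1" ?T] by (cases "0 \<le> ?T") simp_all
  qed
  have "(0 < e (t + 1)) = (0 < e t)" for t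
    using pair[of t] range[of t] range[of "t + 1"] by linarith
  then have "periodic 1 (\<lambda>t. 0 < e t)" unfolding periodic_def by blast
  then have sign: "(0 < e t) = (0 < e 0)" for t
    using periodic_add_mult[of 1 "\<lambda>t. 0 < e t" 0 t] by simp
  have per_e: "periodic 14 e" and per_neg: "periodic 14 (\<lambda>t. - e t)"
    unfolding e_def by (rule periodic_pair_shift[OF per])+
  have dvd: "14 dvd (\<Sum>t\<in>{0..<14}. e t)"
    using dvd_sum_of_periodic_steps[where e = e, OF per _ step] by simp
  show ?thesis
  proof (cases "0 < e 0")
    case True
    have "e t = 3" for t
    proof (rule periodic_steps_eq_3[OF per_e _ _ dvd])
      show "5 \<le> e t + e (t + 1)" for t using pair[of t] sign[of t] sign[of "t + 1"] True by linarith
      show "e t + e (t + 1) + e (t + 2) \<le> 9" for t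
        using triple[of t] sign[of t] sign[of "t + 1"] sign[of "t + 2"] True by linarith
    qed
    then have "mod_progression 14 (1 * 3) f"
      using step by (intro mod_progression_if_steps) (simp add: dvd_diff_commute)
    then show ?thesis using that by blast
  next
    case False
    have "- e t = 3" for t
    proof (rule periodic_steps_eq_3[OF per_neg])
      show "5 \<le> - e t + - e (t + 1)" for t using pair[of t] sign[of t] sign[of "t + 1"] False by linarith
      show "- e t + - e (t + 1) + - e (t + 2) \<le> 9" for t
        using triple[of t] sign[of t] sign[of "t + 1"] sign[of "t + 2"] False by linarith
      show "14 dvd (\<Sum>t\<in>{0..<14}. - e t)" using dvd by (simp add: sum_negf)
    qed
    then have "e t = -3" for t using \<open>- e t = 3\<close> by linarith
    then have "mod_progression 14 (-3) f"
      using step by (intro mod_progression_if_steps) (metis dvd_diff_commute)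
    then show ?thesis using that[of "-1"] by simp
  qed
qed

lemma independent_graph_progressions:
  assumes "independent_graph f g"
  obtains u v where "u = 1 \<or> u = -1" "v = 1 \<or> v = -1"
    "mod_progression 14 (u * 3) f \<and> mod_progression 14 (v * 9) g \<or>
     mod_progression 14 (u * 9) f \<and> mod_progression 14 (v * 3) g"
proof -
  obtain \<alpha>f \<beta>f where f: "\<alpha>f \<noteq> \<beta>f"
    "\<And>t. near (f t) (f (t + 1)) = \<alpha>f" "\<And>t. near (f t) (f (t + 4)) = \<alpha>f"
    "\<And>t. near (f t) (f (t + 2)) = \<beta>f" "\<And>t. near (f t) (f (t + 3)) = \<beta>f"
    using step_pattern[OF assms] by blast
  obtain \<alpha>g \<beta>g where g: "\<alpha>g \<noteq> \<beta>g"
    "\<And>t. near (g t) (g (t + 1)) = \<alpha>g" "\<And>t. near (g t) (g (t + 4)) = \<alpha>g"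
    "\<And>t. near (g t) (g (t + 2)) = \<beta>g" "\<And>t. near (g t) (g (t + 3)) = \<beta>g"
    using step_pattern[OF independent_graph_swap[OF assms]] by blast
  have per: "periodic 14 f" "periodic 14 g"
    using assms unfolding independent_graph_def by simp_all
  have "\<not> (near (f 0) (f 1) \<and> near (g 0) (g 1))" "\<not> (near (f 0) (f 2) \<and> near (g 0) (g 2))"
    using assms unfolding independent_graph_def by (simp_all add: near_def)
  then have "\<not> (\<alpha>f \<and> \<alpha>g)" "\<not> (\<beta>f \<and> \<beta>g)"
    using f(2)[of 0] g(2)[of 0] f(4)[of 0] g(4)[of 0] by simp_all
  show ?thesis
  proof (cases \<alpha>f)
    case True
    with f(1) g(1) \<open>\<not> (\<alpha>f \<and> \<alpha>g)\<close> \<open>\<not> (\<beta>f \<and> \<beta>g)\<close> have "\<not> \<beta>f" "\<not> \<alpha>g" by blast+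
    obtain u where "u = 1 \<or> u = -1" "mod_progression 14 (u * 3) f"
      using progression_if_near_1_far_2_3[OF per(1)] f(2-5) True \<open>\<not> \<beta>f\<close> by metis
    moreover obtain v where "v = 1 \<or> v = -1" "mod_progression 14 (v * 9) g"
      using progression_if_far_1_4[OF per(2)] g(2,3) \<open>\<not> \<alpha>g\<close> by metis
    ultimately show ?thesis using that by blast
  next
    case False
    with f(1) g(1) \<open>\<not> (\<beta>f \<and> \<beta>g)\<close> have "\<alpha>g" "\<not> \<beta>g" by blast+
    obtain u where "u = 1 \<or> u = -1" "mod_progression 14 (u * 9) f"
      using progression_if_far_1_4[OF per(1)] f(2,3) False by metis
    moreover obtain v where "v = 1 \<or> v = -1" "mod_progression 14 (v * 3) g"
      using progression_if_near_1_far_2_3[OF per(2)] g(2-5) \<open>\<alpha>g\<close> \<open>\<not> \<beta>g\<close> by metis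
    ultimately show ?thesis using that by blast
  qed
qed

definition cyclic_code :: "int list set" where
  "cyclic_code = (\<lambda>t. map (\<lambda>a. (t * a) mod 14) [1, 3, 9]) ` {0..<14}"

lemma cyclic_code_graph: "cyclic_code = (\<lambda>t. [t, (3 * t) mod 14, (9 * t) mod 14]) ` {0..<14}"
  unfolding cyclic_code_def by (intro image_cong) (auto simp: mult.commute)

lemma lee_equiv_image:
  assumes "\<sigma> permutes {..<n}" "\<forall>i<n. s i = 1 \<or> s i = -1"
    and "\<And>t. t \<in> A \<Longrightarrow> lee_map q n \<sigma> s c (x t) = y t"
  shows "lee_equiv q n (x ` A) (y ` A)"
proof -
  have "lee_map q n \<sigma> s c ` x ` A = y ` A"
    unfolding image_image using assms(3) by (rule image_cong[OF refl])
  then show ?thesis unfolding lee_equiv_def using assms(1,2) by blast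
qed

lemma lee_map_length_3:
  "lee_map q 3 \<sigma> s c x =
     [(s 0 * x ! \<sigma> 0 + c 0) mod int q, (s 1 * x ! \<sigma> 1 + c 1) mod int q,
      (s 2 * x ! \<sigma> 2 + c 2) mod int q]"
  by (simp add: lee_map_def upt_rec numeral_2_eq_2)

lemma mod_progression_normalize:
  assumes "mod_progression q (u * a) f" "u = 1 \<or> u = -1"
  shows "(u * f t + - u * f 0) mod q = (a * t) mod q"
proof -
  have "q dvd f t - (f 0 + u * a * t)"
    using assms(1) unfolding mod_progression_def by (simp add: mod_eq_dvd_iff)
  then have "q dvd u * (f t - (f 0 + u * a * t))" by simp
  moreover have "u * (f t - (f 0 + u * a * t)) = u * f t + - u * f 0 - a * t"
    using assms(2) by (auto simp: algebra_simps)
  ultimately show ?thesis by (simp add: mod_eq_dvd_iff)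
qed

lemma lee_equiv_graph_3_9:
  assumes "mod_progression 14 (u * 3) f" "mod_progression 14 (v * 9) g"
    and "u = 1 \<or> u = -1" "v = 1 \<or> v = -1"
  shows "lee_equiv 14 3 ((\<lambda>t. [t, f t, g t]) ` {0..<14}) cyclic_code"
  unfolding cyclic_code_graph
proof (rule lee_equiv_image[where \<sigma> = id and s = "\<lambda>i. if i = 1 then u else if i = 2 then v else 1"
      and c = "\<lambda>i. if i = 1 then - u * f 0 else if i = 2 then - v * g 0 else 0"])
  fix t :: int assume "t \<in> {0..<14}"
  then show "lee_map 14 3 id (\<lambda>i. if i = 1 then u else if i = 2 then v else 1)
      (\<lambda>i. if i = 1 then - u * f 0 else if i = 2 then - v * g 0 else 0) [t, f t, g t] =
      [t, 3 * t mod 14, 9 * t mod 14]"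
    using mod_progression_normalize[OF assms(1,3)] mod_progression_normalize[OF assms(2,4)]
    by (simp add: lee_map_length_3)
qed (use assms(3,4) in auto)

lemma lee_equiv_graph_9_3:
  assumes "mod_progression 14 (u * 9) f" "mod_progression 14 (v * 3) g"
    and "u = 1 \<or> u = -1" "v = 1 \<or> v = -1"
  shows "lee_equiv 14 3 ((\<lambda>t. [t, f t, g t]) ` {0..<14}) cyclic_code"
  unfolding cyclic_code_graph
proof (rule lee_equiv_image[where \<sigma> = "transpose 1 2" and s = "\<lambda>i. if i = 1 then v else if i = 2 then u else 1"
      and c = "\<lambda>i. if i = 1 then - v * g 0 else if i = 2 then - u * f 0 else 0"])
  fix t :: int assume "t \<in> {0..<14}"
  then show "lee_map 14 3 (transpose 1 2) (\<lambda>i. if i = 1 then v else if i = 2 then u else 1)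
      (\<lambda>i. if i = 1 then - v * g 0 else if i = 2 then - u * f 0 else 0) [t, f t, g t] =
      [t, 3 * t mod 14, 9 * t mod 14]"
    using mod_progression_normalize[OF assms(1,3)] mod_progression_normalize[OF assms(2,4)]
    by (simp add: lee_map_length_3)
qed (use assms(3,4) permutes_swap_id[of "1::nat" "{..<3}" 2] in auto)

lemma independent_graph_cyclic: "independent_graph (\<lambda>t. (3 * t) mod 14) (\<lambda>t. (9 * t) mod 14)"
  unfolding independent_graph_def
proof (intro conjI allI impI)
  show "periodic 14 (\<lambda>t. (3 * t) mod 14)" "periodic 14 (\<lambda>t. (9 * t) mod 14)"
    unfolding periodic_def by (metis mod_mult_right_eq mod_add_self2)+
next
  fix y z :: int assume "(y - z) mod 14 \<noteq> 0" "near y z"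
  define r where "r = (z - y) mod 14"
  have "near (a * y mod 14) (a * z mod 14) \<longleftrightarrow> (a * r) mod 14 \<notin> {5..9}" for a :: int
  proof -
    have "(a * z mod 14 - a * y mod 14) mod 14 = (a * r) mod 14"
      unfolding r_def by (simp add: mod_diff_eq mod_mult_right_eq right_diff_distrib)
    then show ?thesis unfolding near_def by simp
  qed
  moreover have "r \<in> {1, 2, 3, 4, 10, 11, 12, 13}"
  proof -
    have "r \<in> {0..<14}" "r \<noteq> 0" "r \<notin> {5..9}"
      using \<open>(y - z) mod 14 \<noteq> 0\<close> \<open>near y z\<close> unfolding r_def near_def
      by (auto simp: mod_eq_0_iff_dvd dvd_diff_commute)
    then show ?thesis by auto
  qed
  ultimately show "\<not> (near (3 * y mod 14) (3 * z mod 14) \<and> near (9 * y mod 14) (9 * z mod 14))"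
    by auto
qed

lemma sp_independent_cyclic_code: "sp_independent 5 14 3 cyclic_code"
  unfolding cyclic_code_graph by (rule sp_independent_graph[OF independent_graph_cyclic]) simp_all

lemma card_cyclic_code: "card cyclic_code = 14"
proof -
  have "inj_on (\<lambda>t. [t, (3 * t) mod 14, (9 * t) mod 14]) {0..<14::int}"
    by (rule inj_onI) simp
  then show ?thesis unfolding cyclic_code_graph by (simp add: card_image)
qed

theorem proposition9p6:
  shows "sp_independent 5 14 3 {map (\<lambda>a. (t * a) mod 14) [1, 3, 9] | t. t \<in> {0..<14::int}}
    \<and> card {map (\<lambda>a. (t * a) mod 14) [1, 3, 9] | t. t \<in> {0..<14::int}} = 14
    \<and> (\<forall>S. sp_independent 5 14 3 S \<and> card S = 14 \<longrightarrow>
          lee_equiv 14 3 S {map (\<lambda>a. (t * a) mod 14) [1, 3, 9] | t. t \<in> {0..<14::int}})"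
proof -
  have code: "{map (\<lambda>a. (t * a) mod 14) [1, 3, 9] | t. t \<in> {0..<14::int}} = cyclic_code"
    unfolding cyclic_code_def by blast
  have "lee_equiv 14 3 S cyclic_code" if S_indep: "sp_independent 5 14 3 S" "card S = 14" for S
  proof -
    obtain f g where fg: "independent_graph f g" and S: "S = (\<lambda>t. [t, f t, g t]) ` {0..<14}"
      using independent_set_is_graph[OF S_indep] .
    obtain u v where "u = 1 \<or> u = -1" "v = 1 \<or> v = -1"
      "mod_progression 14 (u * 3) f \<and> mod_progression 14 (v * 9) g \<or>
       mod_progression 14 (u * 9) f \<and> mod_progression 14 (v * 3) g"
      by (rule independent_graph_progressions[OF fg])
    then show ?thesis unfolding S using lee_equiv_graph_3_9 lee_equiv_graph_9_3 by blast
  qed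
  then show ?thesis unfolding code using sp_independent_cyclic_code card_cyclic_code by blast
qed

end
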